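(* Let $d\ge 2$ and $n\ge 2$ be integers and let the $n_c=d^n$ clients be identified with the set $\{0,1,\dots,d-1\}^n$ (grouped by the $d^n$-hypermesh). For each coordinate $k\in\{1,\dots,n\}$ and each client $a$, the group of $a$ in direction $k$ is the set of $d$ clients that agree with $a$ in every coordinate except possibly the $k$-th; thus every client belongs to exactly $n$ groups. Let $M$ be the set of malicious clients, let $\mathcal V$ be the set of groups containing at least one malicious client (the flagged groups), and let the set $I$ of clients identified as malicious consist of those clients all $n$ of whose groups lie in $\mathcal V$. Then (i) every malicious client is identified, i.e. $M\subseteq I$ (true positive rate $100\%$); and (ii) no benign client is identified, i.e. $I\setminus M=\emptyset$ (false positive rate $0\%$), provided that $|M|\le n$, where the case $|M|=n$ is allowed only when at least two malicious clients lie in the same group.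
   Context: This models the detection stage of a secret-sharing-based privacy-preserving quantized federated learning protocol: the server can only examine per-group aggregates, marks a group as suspicious (places it in $\mathcal V$) exactly when it contains a malicious client, and declares a client malicious when all $n$ groups it belongs to are in $\mathcal V$. Two clients are neighbors if their identifiers differ in exactly one coordinate; each group (an edge of the hypermesh) consists of $d$ mutually neighboring clients. *)

theory Defs
  imports Main
begin

text \<open>Clients of the d^n hypermesh: words of length n over {0,...,d-1}
  (coordinates indexed 0..n-1).\<close>
definition clients :: "nat \<Rightarrow> nat \<Rightarrow> nat list set" where
  "clients d n = {a. length a = n \<and> (\<forall>i<n. a ! i < d)}"

definition group :: "nat \<Rightarrow> nat \<Rightarrow> nat list \<Rightarrow> nat \<Rightarrow> nat list set" where
  "group d n a k = {b \<in> clients d n. \<forall>i<n. i \<noteq> k \<longrightarrow> b ! i = a ! i}"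

definition groups :: "nat \<Rightarrow> nat \<Rightarrow> nat list set set" where
  "groups d n = {group d n a k | a k. a \<in> clients d n \<and> k < n}"

definition flagged :: "nat \<Rightarrow> nat \<Rightarrow> nat list set \<Rightarrow> nat list set set" where
  "flagged d n M = {G \<in> groups d n. G \<inter> M \<noteq> {}}"

definition identified :: "nat \<Rightarrow> nat \<Rightarrow> nat list set \<Rightarrow> nat list set" where
  "identified d n M = {a \<in> clients d n. \<forall>k<n. group d n a k \<in> flagged d n M}"

end

theory Submission
  imports Defs
begin

text \<open>Every group through a client is flagged as soon as the client is malicious, so malicious
  clients are always identified. Conversely, if a benign client b is identified, each of its n
  groups contains a malicious client m(k), which differs from b exactly in coordinate k.
  These n witnesses are pairwise distinct, so |M| \<ge> n; and any two of them differ in two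
  coordinates, so they never share a group. Hence |M| = n forces M = {m(k)} and no group
  contains two malicious clients.\<close>

lemma finite_clients: "finite (clients d n)"
proof -
  have "clients d n \<subseteq> {xs. set xs \<subseteq> {..<d} \<and> length xs = n}"
    by (auto simp: clients_def in_set_conv_nth)
  moreover have "finite {xs. set xs \<subseteq> {..<d} \<and> length xs = n}"
    by (rule finite_lists_length_eq) simp
  ultimately show ?thesis
    by (rule finite_subset)
qed

lemma group_in_groups: "a \<in> clients d n \<Longrightarrow> k < n \<Longrightarrow> group d n a k \<in> groups d n"
  by (auto simp: groups_def)

lemma subset_identified:
  assumes "M \<subseteq> clients d n"
  shows "M \<subseteq> identified d n M"
proof
  fix a
  assume "a \<in> M"
  with assms have "a \<in> clients d n" "a \<in> group d n a k" for k
    by (auto simp: group_def)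
  with \<open>a \<in> M\<close> show "a \<in> identified d n M"
    by (auto simp: identified_def flagged_def group_in_groups)
qed

lemma group_member_differs_in_direction:
  assumes "b \<in> clients d n" "x \<in> group d n b k" "x \<noteq> b"
  shows "x ! k \<noteq> b ! k"
proof
  assume "x ! k = b ! k"
  with assms(1,2) have "x = b"
    by (intro nth_equalityI) (auto simp: group_def clients_def)
  with assms(3) show False ..
qed

lemma groups_members_differ_in_one_coordinate:
  assumes "G \<in> groups d n" "x \<in> G" "y \<in> G"
    and "i < n" "j < n" "x ! i \<noteq> y ! i" "x ! j \<noteq> y ! j"
  shows "i = j"
proof -
  from assms(1) obtain a k where G: "G = group d n a k"
    by (auto simp: groups_def)
  have "l = k" if "l < n" "x ! l \<noteq> y ! l" for l
    using that assms(2,3) by (force simp: G group_def)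
  with assms(4-7) show ?thesis
    by metis
qed

lemma benign_identified_witnesses:
  assumes "b \<in> identified d n M" "b \<notin> M"
  obtains m where "m ` {..<n} \<subseteq> M" "inj_on m {..<n}"
    and "\<And>i j. i < n \<Longrightarrow> j < n \<Longrightarrow> i \<noteq> j \<Longrightarrow> m i ! i \<noteq> m j ! i"
proof -
  have b: "b \<in> clients d n"
    using assms(1) by (simp add: identified_def)
  have "\<forall>k<n. \<exists>x. x \<in> group d n b k \<and> x \<in> M"
    using assms(1) by (auto simp: identified_def flagged_def)
  then obtain m where m: "\<And>k. k < n \<Longrightarrow> m k \<in> group d n b k \<and> m k \<in> M"
    by metis
  have diff: "m i ! i \<noteq> m j ! i" if "i < n" "j < n" "i \<noteq> j" for i j
  proof -
    have "m i \<noteq> b"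
      using m[OF \<open>i < n\<close>] assms(2) by auto
    with b m[OF \<open>i < n\<close>] have "m i ! i \<noteq> b ! i"
      using group_member_differs_in_direction by blast
    moreover have "m j ! i = b ! i"
      using m[OF \<open>j < n\<close>] that by (auto simp: group_def)
    ultimately show ?thesis
      by simp
  qed
  have inj: "inj_on m {..<n}"
  proof (rule inj_onI, rule ccontr)
    fix i j
    assume "i \<in> {..<n}" "j \<in> {..<n}" "m i = m j" "i \<noteq> j"
    then have "m i ! i \<noteq> m j ! i"
      by (intro diff) auto
    with \<open>m i = m j\<close> show False
      by simp
  qed
  have "m ` {..<n} \<subseteq> M"
    using m by auto
  then show ?thesis
    using inj diff by (rule that)
qed

lemma card_ge_if_benign_identified:
  assumes "finite M" "b \<in> identified d n M" "b \<notin> M"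
  shows "n \<le> card M"
proof -
  obtain m where sub: "m ` {..<n} \<subseteq> M" and "inj_on m {..<n}"
    using benign_identified_witnesses[OF assms(2,3)] by metis
  then have "card (m ` {..<n}) = n"
    by (simp add: card_image)
  with card_mono[OF assms(1) sub] show ?thesis
    by simp
qed

lemma no_shared_group_if_benign_identified:
  assumes "finite M" "card M \<le> n" "b \<in> identified d n M" "b \<notin> M"
    and "G \<in> groups d n" "x \<in> G \<inter> M" "y \<in> G \<inter> M"
  shows "x = y"
proof -
  obtain m where sub: "m ` {..<n} \<subseteq> M" and "inj_on m {..<n}"
    and diff: "\<And>i j. i < n \<Longrightarrow> j < n \<Longrightarrow> i \<noteq> j \<Longrightarrow> m i ! i \<noteq> m j ! i"
    using benign_identified_witnesses[OF assms(3,4)] by metis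
  then have "card (m ` {..<n}) = card M"
    using assms(2) card_ge_if_benign_identified[OF assms(1,3,4)] by (simp add: card_image)
  then have "M = m ` {..<n}"
    using card_subset_eq[OF assms(1) sub] by simp
  then obtain i j where ij: "i < n" "j < n" "x = m i" "y = m j"
    using assms(6,7) by blast
  show "x = y"
  proof (rule ccontr)
    assume "x \<noteq> y"
    then have "i \<noteq> j"
      using ij by auto
    have "x ! i \<noteq> y ! i" "x ! j \<noteq> y ! j"
      using diff ij \<open>i \<noteq> j\<close> by (metis, metis)
    then have "i = j"
      using groups_members_differ_in_one_coordinate assms(5-7) ij(1,2) by blast
    with \<open>i \<noteq> j\<close> show False ..
  qed
qed

theorem theorem1:
  fixes d n :: nat and M :: "nat list set"
  assumes "d \<ge> 2" and "n \<ge> 2" and "M \<subseteq> clients d n"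
  shows "M \<subseteq> identified d n M
    \<and> ((card M \<le> n \<and>
         (card M = n \<longrightarrow> (\<exists>G \<in> groups d n. \<exists>x y. x \<in> G \<inter> M \<and> y \<in> G \<inter> M \<and> x \<noteq> y)))
        \<longrightarrow> identified d n M - M = {})"
proof (intro conjI impI)
  show "M \<subseteq> identified d n M"
    using assms(3) by (rule subset_identified)
next
  assume bound: "card M \<le> n \<and>
    (card M = n \<longrightarrow> (\<exists>G \<in> groups d n. \<exists>x y. x \<in> G \<inter> M \<and> y \<in> G \<inter> M \<and> x \<noteq> y))"
  have "finite M"
    using assms(3) finite_clients by (rule finite_subset)
  show "identified d n M - M = {}"
  proof (rule ccontr)
    assume "identified d n M - M \<noteq> {}"
    then obtain b where b: "b \<in> identified d n M" "b \<notin> M"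
      by blast
    with \<open>finite M\<close> bound have "card M = n"
      using card_ge_if_benign_identified by fastforce
    with bound obtain G x y where "G \<in> groups d n" "x \<in> G \<inter> M" "y \<in> G \<inter> M" "x \<noteq> y"
      by blast
    with \<open>finite M\<close> bound b show False
      using no_shared_group_if_benign_identified by blast
  qed
qed

end
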